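(* Let $R$ be a commutative ring which is free as an abelian group, with $\mathbb{Z}$-basis $V=\{v_k\}_{k\in I}$ (the rank may be infinite), let $n\ge 2$ and let $p$ be a prime. For $r\ge 1$ let $\Gamma_r=\Gamma(SL_n(R),p^r)=\ker\big(SL_n(R)\to SL_n(R\otimes_{\mathbb{Z}}\mathbb{Z}/p^r)\big)$. Let $\mathfrak{g}=\mathfrak{sl}_n(\mathbb{F}_p[V])$ and let $\mathfrak{L}$ be the kernel of the evaluation map $\mathfrak{g}\otimes_{\mathbb{F}_p}\mathbb{F}_p[t]\xrightarrow{t=0}\mathfrak{g}$, i.e. $\mathfrak{L}=\mathfrak{g}\otimes_{\mathbb{F}_p} t\mathbb{F}_p[t]$. Then $\mathfrak{L}\cong \mathrm{gr}_*(\Gamma(SL_n(R),p))$ as Lie algebras over $\mathbb{F}_p$.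
   Context: $\mathbb{F}_p[V]$ denotes $R\otimes_{\mathbb{Z}}\mathbb{Z}/p=R/pR$, a commutative $\mathbb{F}_p$-algebra whose underlying vector space is free on (the image of) $V$. $\mathfrak{sl}_n(\mathbb{F}_p[V])$ is the Lie algebra of traceless $n\times n$ matrices over $R/pR$ with bracket $[A,B]=AB-BA$. $\mathfrak{g}\otimes_{\mathbb{F}_p}\mathbb{F}_p[t]$ has bracket $[A\otimes t^i,B\otimes t^j]=(AB-BA)\otimes t^{i+j}$. The filtration $\cdots\subseteq\Gamma_{r+1}\subseteq\Gamma_r\subseteq\cdots\subseteq\Gamma_1$ satisfies $[\Gamma_r,\Gamma_s]\subseteq\Gamma_{r+s}$ (group commutator $[g,h]=g^{-1}h^{-1}gh$), and each $\Gamma_r/\Gamma_{r+1}$ is an elementary abelian $p$-group, regarded as an $\mathbb{F}_p$-vector space. $\mathrm{gr}_*(\Gamma(SL_n(R),p))=\bigoplus_{r\ge1}\Gamma_r/\Gamma_{r+1}$, with Lie bracket obtained by extending bilinearly the maps $\Gamma_r/\Gamma_{r+1}\times\Gamma_s/\Gamma_{s+1}\to\Gamma_{r+s}/\Gamma_{r+s+1}$ induced by the group commutator. *)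

theory Defs
  imports "HOL-Analysis.Analysis" "HOL-Algebra.Algebra"
begin

definition int_scale :: "int \<Rightarrow> 'a::comm_ring_1 \<Rightarrow> 'a" where
  "int_scale k x = of_int k * x"

definition free_Z_basis :: "'a::comm_ring_1 set \<Rightarrow> bool" where
  "free_Z_basis V \<longleftrightarrow> \<not> module.dependent int_scale V \<and> module.span int_scale V = UNIV"

definition ring_of :: "'a::comm_ring_1 ring" where
  "ring_of = \<lparr>carrier = UNIV, monoid.mult = (*), one = 1, ring.zero = 0, ring.add = (+)\<rparr>"

definition mult_ideal :: "nat \<Rightarrow> 'a::comm_ring_1 set" where
  "mult_ideal m = {of_nat m * x | x. True}"

text \<open>F_p[V] = R/pR as a HOL-Algebra quotient ring.\<close>
definition Rmodp :: "nat \<Rightarrow> 'a::comm_ring_1 set ring" where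
  "Rmodp p = ring_of Quot mult_ideal p"

definition sl_add :: "('b, 'c) ring_scheme \<Rightarrow> ('n::finite \<Rightarrow> 'n \<Rightarrow> 'b) monoid" where
  "sl_add S = \<lparr>carrier = {M. (\<forall>i j. M i j \<in> carrier S) \<and> finsum S (\<lambda>i. M i i) UNIV = \<zero>\<^bsub>S\<^esub>},
               monoid.mult = (\<lambda>A B. \<lambda>i j. A i j \<oplus>\<^bsub>S\<^esub> B i j),
               one = (\<lambda>i j. \<zero>\<^bsub>S\<^esub>)\<rparr>"

definition sl_bracket :: "('b, 'c) ring_scheme \<Rightarrow> ('n::finite \<Rightarrow> 'n \<Rightarrow> 'b) \<Rightarrow> ('n \<Rightarrow> 'n \<Rightarrow> 'b) \<Rightarrow> ('n \<Rightarrow> 'n \<Rightarrow> 'b)" where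
  "sl_bracket S A B = (\<lambda>i j. finsum S (\<lambda>l. A i l \<otimes>\<^bsub>S\<^esub> B l j) UNIV
                            \<ominus>\<^bsub>S\<^esub> finsum S (\<lambda>l. B i l \<otimes>\<^bsub>S\<^esub> A l j) UNIV)"

definition pos_degrees :: "nat set" where
  "pos_degrees = {r. 1 \<le> r}"

text \<open>L = g \<otimes> t F_p[t] = direct sum over i \<ge> 1 of copies g t^i, additive group.\<close>
definition loop_add :: "nat \<Rightarrow> (nat \<Rightarrow> 'n::finite \<Rightarrow> 'n \<Rightarrow> 'a::comm_ring_1 set) monoid" where
  "loop_add p = sum_group pos_degrees (\<lambda>_. sl_add (Rmodp p :: 'a set ring))"

text \<open>Bracket on L: [A t^i, B t^j] = [A,B] t^(i+j), extended bilinearly.\<close>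
definition loop_bracket :: "nat \<Rightarrow> (nat \<Rightarrow> 'n::finite \<Rightarrow> 'n \<Rightarrow> 'a::comm_ring_1 set)
      \<Rightarrow> (nat \<Rightarrow> 'n \<Rightarrow> 'n \<Rightarrow> 'a set) \<Rightarrow> (nat \<Rightarrow> 'n \<Rightarrow> 'n \<Rightarrow> 'a set)" where
  "loop_bracket p xa ya = (\<lambda>k\<in>pos_degrees.
      finprod (sl_add (Rmodp p :: 'a set ring))
        (\<lambda>(i, j). sl_bracket (Rmodp p :: 'a set ring) (xa i) (ya j))
        {(i, j). 1 \<le> i \<and> 1 \<le> j \<and> i + j = k})"

definition SL :: "('a::comm_ring_1 ^ 'n::finite ^ 'n) monoid" where
  "SL = \<lparr>carrier = {A. det A = 1}, monoid.mult = (**), one = mat 1\<rparr>"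

definition Gam :: "nat \<Rightarrow> nat \<Rightarrow> ('a::comm_ring_1 ^ 'n::finite ^ 'n) set" where
  "Gam p r = {A \<in> carrier SL. \<forall>i j. A $ i $ j - mat 1 $ i $ j \<in> mult_ideal (p ^ r)}"

definition gr_piece :: "nat \<Rightarrow> nat \<Rightarrow> ('a::comm_ring_1 ^ 'n::finite ^ 'n) set monoid" where
  "gr_piece p r = (SL\<lparr>carrier := Gam p r\<rparr>) Mod (Gam p (r + 1))"

definition grp_comm :: "('a::comm_ring_1 ^ 'n::finite ^ 'n) \<Rightarrow> ('a ^ 'n ^ 'n) \<Rightarrow> ('a ^ 'n ^ 'n)" where
  "grp_comm g h = inv\<^bsub>SL\<^esub> g \<otimes>\<^bsub>SL\<^esub> inv\<^bsub>SL\<^esub> h \<otimes>\<^bsub>SL\<^esub> g \<otimes>\<^bsub>SL\<^esub> h"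

definition coset_comm :: "nat \<Rightarrow> nat \<Rightarrow> nat \<Rightarrow> ('a::comm_ring_1 ^ 'n::finite ^ 'n) set
      \<Rightarrow> ('a ^ 'n ^ 'n) set \<Rightarrow> ('a ^ 'n ^ 'n) set" where
  "coset_comm p r s a b = Gam p (r + s + 1) #>\<^bsub>SL\<^esub> grp_comm (SOME g. g \<in> a) (SOME h. h \<in> b)"

definition gr_add :: "nat \<Rightarrow> (nat \<Rightarrow> ('a::comm_ring_1 ^ 'n::finite ^ 'n) set) monoid" where
  "gr_add p = sum_group pos_degrees (gr_piece p)"

definition gr_bracket :: "nat \<Rightarrow> (nat \<Rightarrow> ('a::comm_ring_1 ^ 'n::finite ^ 'n) set)
      \<Rightarrow> (nat \<Rightarrow> ('a ^ 'n ^ 'n) set) \<Rightarrow> (nat \<Rightarrow> ('a ^ 'n ^ 'n) set)" where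
  "gr_bracket p x y = (\<lambda>k\<in>pos_degrees.
      finprod (gr_piece p k) (\<lambda>(r, s). coset_comm p r s (x r) (y s))
        {(r, s). 1 \<le> r \<and> 1 \<le> s \<and> r + s = k})"

text \<open>Isomorphism of Lie algebras over F_p: an isomorphism of the underlying additive groups
  (F_p-linearity is automatic for additive maps between F_p-vector spaces) preserving brackets.\<close>
definition lie_iso :: "('x, 'c) monoid_scheme \<Rightarrow> ('x \<Rightarrow> 'x \<Rightarrow> 'x)
      \<Rightarrow> ('y, 'd) monoid_scheme \<Rightarrow> ('y \<Rightarrow> 'y \<Rightarrow> 'y) \<Rightarrow> ('x \<Rightarrow> 'y) \<Rightarrow> bool" where
  "lie_iso L brL M brM f \<longleftrightarrow> f \<in> iso L M \<and>
     (\<forall>x\<in>carrier L. \<forall>y\<in>carrier L. f (brL x y) = brM (f x) (f y))"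

end

theory Submission
  imports Defs
begin

text \<open>For \<open>r \<ge> 1\<close> every \<open>A \<in> \<Gamma>\<^sub>r\<close> is \<open>1 + p\<^sup>r Y\<close> with \<open>Y\<close> unique, since \<open>R\<close> has no
  \<open>p\<close>-torsion, and \<open>A \<mapsto> Y mod p\<close> is a homomorphism \<open>\<Gamma>\<^sub>r \<rightarrow> sl\<^sub>n(R/pR)\<close>:
  \<open>(1 + p\<^sup>r Y)(1 + p\<^sup>r Z) = 1 + p\<^sup>r (Y + Z + p\<^sup>r YZ)\<close>, and
  \<open>det (1 + p\<^sup>r Y) \<equiv> 1 + p\<^sup>r trace Y (mod p\<^sup>2\<^sup>r)\<close> forces \<open>trace Y \<equiv> 0\<close>. Its kernel is
  \<open>\<Gamma>\<^sub>r\<^sub>+\<^sub>1\<close>, and it is onto because the elementary matrices \<open>1 + p\<^sup>r a e\<^sub>k\<^sub>l\<close> and the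
  unipotent \<open>1 + p\<^sup>r a (e\<^sub>k - e\<^sub>l)(e\<^sub>k + e\<^sub>l)\<^sup>T\<close> lie in \<open>\<Gamma>\<^sub>r\<close> and their images generate
  \<open>sl\<^sub>n(R/pR)\<close>. The commutator of \<open>A = 1 + p\<^sup>r Y\<close> and \<open>B = 1 + p\<^sup>s Z\<close> is
  \<open>1 + p\<^sup>r\<^sup>+\<^sup>s (BA)\<^sup>-\<^sup>1 [Y, Z]\<close> with \<open>(BA)\<^sup>-\<^sup>1 \<equiv> 1 (mod p)\<close>, so the isomorphisms
  \<open>\<Gamma>\<^sub>r/\<Gamma>\<^sub>r\<^sub>+\<^sub>1 \<cong> sl\<^sub>n(R/pR)\<close> turn the commutator maps into
  \<open>[A t\<^sup>r, B t\<^sup>s] = [A, B] t\<^sup>r\<^sup>+\<^sup>s\<close>, and summing over \<open>r\<close> gives the Lie algebra isomorphism.\<close>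

section \<open>Finite products and direct sums of groups\<close>

lemma (in comm_group) subgroup_finprod_closed:
  assumes "subgroup H G" "finite S" "\<And>s. s \<in> S \<Longrightarrow> f s \<in> H"
  shows "finprod G f S \<in> H"
  using assms(2,3)
proof (induction S rule: finite_induct)
  case empty
  show ?case using subgroup.one_closed[OF assms(1)] by simp
next
  case (insert x S)
  have "f \<in> S \<rightarrow> carrier G" "f x \<in> carrier G"
    using insert.prems subgroup.subset[OF assms(1)] by auto
  then show ?case
    using insert subgroup.m_closed[OF assms(1)] by simp
qed

lemma comm_group_hom_finprod:
  assumes "h \<in> hom G H" "comm_group G" "comm_group H" "finite S" "f \<in> S \<rightarrow> carrier G"
    and "\<And>s. s \<in> S \<Longrightarrow> g s = h (f s)"
  shows "h (finprod G f S) = finprod H g S"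
proof -
  interpret G: comm_group G by fact
  interpret H: comm_group H by fact
  interpret group_hom G H h by unfold_locales (fact assms(1))
  have "h (finprod G f S) = finprod H (h \<circ> f) S"
    using assms(4,5)
  proof (induction S rule: finite_induct)
    case (insert x S)
    then have "f \<in> S \<rightarrow> carrier G" "f x \<in> carrier G" by auto
    with insert show ?case by (simp add: Pi_def)
  qed simp
  also have "\<dots> = finprod H g S"
    using assms(5,6) by (intro H.finprod_cong') (auto simp: Pi_def)
  finally show ?thesis .
qed

lemma hom_sum_group_map:
  assumes hom: "\<And>i. i \<in> I \<Longrightarrow> f i \<in> hom (G i) (H i)"
    and G: "\<And>i. i \<in> I \<Longrightarrow> group (G i)" and H: "\<And>i. i \<in> I \<Longrightarrow> group (H i)"
  shows "(\<lambda>x. \<lambda>i\<in>I. f i (x i)) \<in> hom (sum_group I G) (sum_group I H)"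
proof (rule homI)
  have one: "f i \<one>\<^bsub>G i\<^esub> = \<one>\<^bsub>H i\<^esub>" if "i \<in> I" for i
    using group_hom.hom_one[of "G i" "H i" "f i"] hom G H that
    by (simp add: group_hom_def group_hom_axioms_def)
  fix x assume "x \<in> carrier (sum_group I G)"
  then have x: "x \<in> (\<Pi>\<^sub>E i\<in>I. carrier (G i))" "finite {i \<in> I. x i \<noteq> \<one>\<^bsub>G i\<^esub>}"
    by (auto simp: carrier_sum_group G)
  have "(\<lambda>i\<in>I. f i (x i)) \<in> (\<Pi>\<^sub>E i\<in>I. carrier (H i))"
    using x(1) hom by (auto simp: PiE_iff intro: hom_in_carrier)
  moreover have "{i \<in> I. f i (x i) \<noteq> \<one>\<^bsub>H i\<^esub>} \<subseteq> {i \<in> I. x i \<noteq> \<one>\<^bsub>G i\<^esub>}"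
    using one by auto
  then have "finite {i \<in> I. (\<lambda>i\<in>I. f i (x i)) i \<noteq> \<one>\<^bsub>H i\<^esub>}"
    using x(2) by (auto intro: finite_subset)
  ultimately show "(\<lambda>i\<in>I. f i (x i)) \<in> carrier (sum_group I H)"
    by (simp add: carrier_sum_group H)
next
  fix x y assume "x \<in> carrier (sum_group I G)" "y \<in> carrier (sum_group I G)"
  then have "x i \<in> carrier (G i)" "y i \<in> carrier (G i)" if "i \<in> I" for i
    using that by (auto simp: carrier_sum_group G)
  then show "(\<lambda>i\<in>I. f i ((x \<otimes>\<^bsub>sum_group I G\<^esub> y) i))
           = (\<lambda>i\<in>I. f i (x i)) \<otimes>\<^bsub>sum_group I H\<^esub> (\<lambda>i\<in>I. f i (y i))"
    using hom by (auto intro: restrict_ext simp: hom_mult)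
qed

lemma iso_sum_group_map:
  assumes iso: "\<And>i. i \<in> I \<Longrightarrow> f i \<in> iso (G i) (H i)"
    and G: "\<And>i. i \<in> I \<Longrightarrow> group (G i)" and H: "\<And>i. i \<in> I \<Longrightarrow> group (H i)"
  shows "(\<lambda>x. \<lambda>i\<in>I. f i (x i)) \<in> iso (sum_group I G) (sum_group I H)"
proof -
  define g where "g i = inv_into (carrier (G i)) (f i)" for i
  have g: "g i \<in> iso (H i) (G i)" if "i \<in> I" for i
    unfolding g_def by (rule group.iso_set_sym[OF G[OF that] iso[OF that]])
  have homf: "(\<lambda>x. \<lambda>i\<in>I. f i (x i)) \<in> hom (sum_group I G) (sum_group I H)"
    using iso G H by (intro hom_sum_group_map) (auto simp: iso_def)
  have homg: "(\<lambda>y. \<lambda>i\<in>I. g i (y i)) \<in> hom (sum_group I H) (sum_group I G)"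
    using g G H by (intro hom_sum_group_map) (auto simp: iso_def)
  have "bij_betw (\<lambda>x. \<lambda>i\<in>I. f i (x i)) (carrier (sum_group I G)) (carrier (sum_group I H))"
  proof (rule bij_betw_byWitness[where f' = "\<lambda>y. \<lambda>i\<in>I. g i (y i)"])
    have "x i \<in> carrier (G i)" if "x \<in> carrier (sum_group I G)" "i \<in> I" for x i
      using that by (auto simp: carrier_sum_group G)
    then show "\<forall>x\<in>carrier (sum_group I G). (\<lambda>i\<in>I. g i ((\<lambda>i\<in>I. f i (x i)) i)) = x"
      using iso by (auto simp: carrier_sum_group G g_def iso_def bij_betw_def PiE_iff
          extensional_def fun_eq_iff)
    have "y i \<in> carrier (H i)" if "y \<in> carrier (sum_group I H)" "i \<in> I" for y i
      using that by (auto simp: carrier_sum_group H)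
    then show "\<forall>y\<in>carrier (sum_group I H). (\<lambda>i\<in>I. f i ((\<lambda>i\<in>I. g i (y i)) i)) = y"
      using iso by (auto simp: carrier_sum_group H g_def iso_def bij_betw_def PiE_iff
          extensional_def fun_eq_iff f_inv_into_f)
  qed (use homf homg in \<open>auto simp: hom_def\<close>)
  with homf show ?thesis by (simp add: iso_def)
qed

lemma (in group_hom) image_rcoset_kernel:
  assumes "g \<in> carrier G"
  shows "h ` (kernel G H h #> g) = {h g}"
proof -
  have "h (k \<otimes> g) = h g" if "k \<in> kernel G H h" for k
    using that assms by (simp add: kernel_def)
  moreover have "g \<in> kernel G H h #> g"
    using assms by (simp add: G.rcos_self subgroup_kernel)
  ultimately show ?thesis by (force simp: r_coset_def)
qed

lemma (in group_hom) FactGroup_the_elem_some: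
  assumes "C \<in> carrier (G Mod kernel G H h)"
  shows "(SOME g. g \<in> C) \<in> carrier G" "the_elem (h ` C) = h (SOME g. g \<in> C)"
proof -
  obtain g where g: "g \<in> carrier G" "C = kernel G H h #> g"
    using assms by (auto simp: FactGroup_def RCOSETS_def)
  then have some: "(SOME g. g \<in> C) \<in> C"
    using G.rcos_self subgroup_kernel by (metis someI)
  then show "(SOME g. g \<in> C) \<in> carrier G"
    using g G.r_coset_subset_G subgroup.subset subgroup_kernel by blast
  have "h ` C = {h g}"
    using image_rcoset_kernel g by simp
  with some show "the_elem (h ` C) = h (SOME g. g \<in> C)"
    by (metis image_eqI singletonD the_elem_eq)
qed

section \<open>The quotient ring \<open>R/mR\<close>\<close>

lemma module_int_scale: "Modules.module int_scale"
  by unfold_locales (auto simp: int_scale_def algebra_simps)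

lemma free_Z_basis_imp_torsion_free:
  fixes V :: "'a::comm_ring_1 set" and x :: 'a
  assumes "free_Z_basis V" "m \<noteq> 0" "of_int m * x = 0"
  shows "x = 0"
proof -
  interpret Z: Modules.module int_scale by (rule module_int_scale)
  have "x \<in> Z.span V" using assms(1) by (simp add: free_Z_basis_def)
  then obtain t c where t: "finite t" "t \<subseteq> V" "x = (\<Sum>v\<in>t. int_scale (c v) v)"
    unfolding Z.span_explicit by blast
  have "(\<Sum>v\<in>t. int_scale (m * c v) v) = of_int m * x"
    by (simp add: t(3) sum_distrib_left int_scale_def mult.assoc)
  then have "m * c v = 0" if "v \<in> t" for v
    using assms t Z.independentD[of V t "\<lambda>v. m * c v"] that by (auto simp: free_Z_basis_def)
  with assms(2) show ?thesis
    by (simp add: t(3) int_scale_def)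
qed

lemma ring_of_simps [simp]:
  "carrier (ring_of :: 'a::comm_ring_1 ring) = UNIV"
  "(\<oplus>\<^bsub>(ring_of :: 'a ring)\<^esub>) = (+)"
  "(\<otimes>\<^bsub>(ring_of :: 'a ring)\<^esub>) = (*)"
  "\<zero>\<^bsub>(ring_of :: 'a ring)\<^esub> = 0"
  "\<one>\<^bsub>(ring_of :: 'a ring)\<^esub> = 1"
  by (auto simp: ring_of_def)

lemma cring_ring_of: "cring (ring_of :: 'a::comm_ring_1 ring)"
proof (rule cringI)
  show "abelian_group (ring_of :: 'a ring)"
    by (rule abelian_groupI) (auto simp: algebra_simps intro: exI[of _ "- x" for x])
  show "comm_monoid (ring_of :: 'a ring)"
    by (rule comm_monoidI) (auto simp: algebra_simps)
qed (simp add: distrib_right)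

lemma a_inv_ring_of [simp]: "\<ominus>\<^bsub>(ring_of :: 'a::comm_ring_1 ring)\<^esub> x = - x"
proof -
  interpret cring "ring_of :: 'a ring" by (rule cring_ring_of)
  show ?thesis using sum_zero_eq_neg[of "- x" x] by simp
qed

lemma a_minus_ring_of [simp]: "x \<ominus>\<^bsub>(ring_of :: 'a::comm_ring_1 ring)\<^esub> y = x - y"
  by (simp add: a_minus_def)

lemma mult_ideal_iff: "x \<in> mult_ideal m \<longleftrightarrow> (\<exists>y. x = of_nat m * y)"
  by (auto simp: mult_ideal_def)

lemma of_nat_mult_in_mult_ideal: "of_nat m * x \<in> mult_ideal m"
  by (auto simp: mult_ideal_def)

lemma mult_ideal_add: "x \<in> mult_ideal m \<Longrightarrow> y \<in> mult_ideal m \<Longrightarrow> x + y \<in> mult_ideal m"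
  by (auto simp: mult_ideal_def) (metis distrib_left)

lemma mult_ideal_uminus: "x \<in> mult_ideal m \<Longrightarrow> - x \<in> mult_ideal m"
  by (auto simp: mult_ideal_def) (metis mult_minus_right)

lemma mult_ideal_diff: "x \<in> mult_ideal m \<Longrightarrow> y \<in> mult_ideal m \<Longrightarrow> x - y \<in> mult_ideal m"
  using mult_ideal_add mult_ideal_uminus by fastforce

lemma mult_ideal_mult: "x \<in> mult_ideal m \<Longrightarrow> y * x \<in> mult_ideal m"
  by (auto simp: mult_ideal_def) (metis mult.left_commute)

lemma ideal_mult_ideal: "ideal (mult_ideal m) (ring_of :: 'a::comm_ring_1 ring)"
proof -
  interpret cring "ring_of :: 'a ring" by (rule cring_ring_of)
  have "0 \<in> mult_ideal m"
    using of_nat_mult_in_mult_ideal[of m 0] by simp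
  then show ?thesis
    by (intro idealI ring_axioms add.subgroupI)
       (auto simp: mult_ideal_add mult_ideal_uminus mult_ideal_mult, metis mult.commute mult_ideal_mult)
qed

definition residue :: "nat \<Rightarrow> 'a::comm_ring_1 \<Rightarrow> 'a set" where
  "residue m a = mult_ideal m +>\<^bsub>(ring_of :: 'a ring)\<^esub> a"

lemma cring_Rmodp: "cring (Rmodp m :: 'a::comm_ring_1 set ring)"
  unfolding Rmodp_def by (rule ideal.quotient_is_cring[OF ideal_mult_ideal cring_ring_of])

lemma ring_hom_cring_residue: "ring_hom_cring (ring_of :: 'a::comm_ring_1 ring) (Rmodp m) (residue m)"
  unfolding Rmodp_def residue_def[abs_def]
  by (rule ideal.rcos_ring_hom_cring[OF ideal_mult_ideal cring_ring_of])

lemma carrier_Rmodp: "carrier (Rmodp m :: 'a::comm_ring_1 set ring) = range (residue m)"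
  by (auto simp: Rmodp_def FactRing_def A_RCOSETS_def' residue_def)

lemma residue_eq_iff: "residue m a = residue m b \<longleftrightarrow> a - b \<in> mult_ideal m"
proof -
  have coset: "residue m c = {h + c | h. h \<in> mult_ideal m}" for c :: 'a
    by (auto simp: residue_def a_r_coset_def')
  show ?thesis
  proof
    assume "residue m a = residue m b"
    then have "a \<in> residue m b"
      using coset[of a] of_nat_mult_in_mult_ideal[of m 0] by force
    then show "a - b \<in> mult_ideal m"
      by (auto simp: coset)
  next
    assume d: "a - b \<in> mult_ideal m"
    have "h + a = (h + (a - b)) + b" "h + b = (h - (a - b)) + a" for h
      by simp_all
    then show "residue m a = residue m b"
      unfolding coset using d mult_ideal_add mult_ideal_diff by blast
  qed
qed

lemma residue_hom_simps:
  "residue m a \<oplus>\<^bsub>(Rmodp m :: 'a::comm_ring_1 set ring)\<^esub> residue m b = residue m (a + b)"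
  "residue m a \<otimes>\<^bsub>(Rmodp m :: 'a set ring)\<^esub> residue m b = residue m (a * b)"
  "residue m a \<ominus>\<^bsub>(Rmodp m :: 'a set ring)\<^esub> residue m b = residue m (a - b)"
  "\<zero>\<^bsub>(Rmodp m :: 'a set ring)\<^esub> = residue m 0"
  "finsum (Rmodp m :: 'a set ring) (\<lambda>i. residue m (f i)) A = residue m (sum f A)"
proof -
  interpret h: ring_hom_cring "ring_of :: 'a ring" "Rmodp m" "residue m"
    by (rule ring_hom_cring_residue)
  show "residue m a \<oplus>\<^bsub>Rmodp m\<^esub> residue m b = residue m (a + b)"
    using h.hom_add[of a b] by simp
  show "residue m a \<otimes>\<^bsub>Rmodp m\<^esub> residue m b = residue m (a * b)"
    using h.hom_mult[of a b] by simp
  show "\<zero>\<^bsub>Rmodp m\<^esub> = residue m (0 :: 'a)"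
    by (simp add: h.hom_zero[symmetric])
  show "residue m a \<ominus>\<^bsub>Rmodp m\<^esub> residue m b = residue m (a - b)"
    using h.hom_add[of a "- b"] h.hom_a_inv[of b] by (simp add: a_minus_def)
  have "finsum ring_of f A = sum f A"
    by (induction A rule: infinite_finite_induct) auto
  then show "finsum (Rmodp m) (\<lambda>i. residue m (f i)) A = residue m (sum f A)"
    using h.hom_finsum[of f A] by (simp add: comp_def)
qed

lemma residue_eq_zero_iff: "residue m a = \<zero>\<^bsub>(Rmodp m :: 'a::comm_ring_1 set ring)\<^esub> \<longleftrightarrow> a \<in> mult_ideal m"
  by (simp add: residue_hom_simps residue_eq_iff)

lemma sl_add_simps:
  "carrier (sl_add S) = {M. (\<forall>i j. M i j \<in> carrier S) \<and> finsum S (\<lambda>i. M i i) UNIV = \<zero>\<^bsub>S\<^esub>}"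
  "(\<otimes>\<^bsub>sl_add S\<^esub>) = (\<lambda>A B. \<lambda>i j. A i j \<oplus>\<^bsub>S\<^esub> B i j)"
  "\<one>\<^bsub>sl_add S\<^esub> = (\<lambda>i j. \<zero>\<^bsub>S\<^esub>)"
  by (auto simp: sl_add_def)

lemma (in cring) comm_group_sl_add: "comm_group (sl_add R :: ('n::finite \<Rightarrow> 'n \<Rightarrow> 'a) monoid)"
proof (rule comm_groupI)
  fix x y assume x: "x \<in> carrier (sl_add R :: ('n \<Rightarrow> 'n \<Rightarrow> 'a) monoid)"
    and y: "y \<in> carrier (sl_add R :: ('n \<Rightarrow> 'n \<Rightarrow> 'a) monoid)"
  have "finsum R (\<lambda>i. x i i \<oplus> y i i) UNIV = finsum R (\<lambda>i. x i i) UNIV \<oplus> finsum R (\<lambda>i. y i i) UNIV"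
    using x y by (intro finsum_addf) (auto simp: sl_add_simps)
  then show "x \<otimes>\<^bsub>sl_add R\<^esub> y \<in> carrier (sl_add R)"
    using x y by (auto simp: sl_add_simps)
  show "x \<otimes>\<^bsub>sl_add R\<^esub> y = y \<otimes>\<^bsub>sl_add R\<^esub> x"
    using x y by (auto simp: sl_add_simps a_comm fun_eq_iff)
  have entries: "\<And>i j. x i j \<in> carrier R" and trace: "finsum R (\<lambda>i. x i i) UNIV = \<zero>"
    using x by (auto simp: sl_add_simps)
  have "finsum R (\<lambda>i. \<ominus> x i i) UNIV \<oplus> finsum R (\<lambda>i. x i i) UNIV = finsum R (\<lambda>i. \<ominus> x i i \<oplus> x i i) UNIV"
    using entries by (intro finsum_addf[symmetric]) auto
  also have "\<dots> = \<zero>"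
    using entries by (simp add: l_neg)
  finally have "finsum R (\<lambda>i. \<ominus> x i i) UNIV = \<zero>"
    using trace entries by simp
  then show "\<exists>y\<in>carrier (sl_add R). y \<otimes>\<^bsub>sl_add R\<^esub> x = \<one>\<^bsub>sl_add R\<^esub>"
    using entries by (intro bexI[of _ "\<lambda>i j. \<ominus> x i j"]) (auto simp: sl_add_simps l_neg fun_eq_iff)
qed (auto simp: sl_add_simps a_assoc fun_eq_iff)

section \<open>Matrices over a commutative ring\<close>

definition scale_mat :: "'a::times \<Rightarrow> 'a^'m^'n \<Rightarrow> 'a^'m^'n" where
  "scale_mat c A = (\<chi> i j. c * A$i$j)"

lemma scale_mat_component [simp]: "scale_mat c A $ i $ j = c * A$i$j"
  by (simp add: scale_mat_def)

lemma matrix_mul_component: "(A ** B) $ i $ j = (\<Sum>k\<in>UNIV. A$i$k * B$k$j)"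
  by (simp add: matrix_matrix_mult_def)

lemma mat_one_component: "(mat 1 :: 'a::zero_neq_one^'n^'n) $ i $ j = (if i = j then 1 else 0)"
  by (simp add: mat_def)

lemma scale_mat_matrix_mul_left: "scale_mat (c::'a::comm_semiring_1) A ** B = scale_mat c (A ** B)"
  by (simp add: vec_eq_iff matrix_mul_component sum_distrib_left mult.assoc)

lemma scale_mat_matrix_mul_right: "A ** scale_mat (c::'a::comm_semiring_1) B = scale_mat c (A ** B)"
  by (simp add: vec_eq_iff matrix_mul_component sum_distrib_left mult.left_commute)

lemma scale_mat_scale_mat: "scale_mat (a::'a::semigroup_mult) (scale_mat b A) = scale_mat (a * b) A"
  by (simp add: vec_eq_iff mult.assoc)

lemma scale_mat_add: "scale_mat (c::'a::semiring) (A + B) = scale_mat c A + scale_mat c B"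
  by (simp add: vec_eq_iff distrib_left)

lemma scale_mat_diff: "scale_mat (c::'a::ring) (A - B) = scale_mat c A - scale_mat c B"
  by (simp add: vec_eq_iff right_diff_distrib)

lemma scale_mat_uminus: "scale_mat (c::'a::ring) (- A) = - scale_mat c A"
  by (simp add: vec_eq_iff)

lemma scale_mat_zero [simp]: "scale_mat (c::'a::mult_zero) 0 = 0"
  by (simp add: vec_eq_iff)

lemma matrix_add_rdistrib: "(B + C) ** (A::'a::semiring_1^'k^'m) = B ** A + C ** A"
  by (simp add: vec_eq_iff matrix_mul_component sum.distrib distrib_right)

definition adjugate :: "'a::comm_ring_1^'n^'n \<Rightarrow> 'a^'n^'n" where
  "adjugate A = (\<chi> k j. det (\<chi> r. if r = j then (\<chi> l. if l = k then 1 else 0) else A$r))"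

text \<open>Entry \<open>(i, j)\<close> of \<open>A ** adjugate A\<close> is, by linearity of \<open>det\<close> in row \<open>j\<close>, the
  determinant of \<open>A\<close> with row \<open>j\<close> replaced by row \<open>i\<close>.\<close>
lemma matrix_mul_adjugate: "A ** adjugate A = mat (det A)"
proof -
  have "(A ** adjugate A) $ i $ j = (if i = j then det A else 0)" for i j
  proof -
    have "(A ** adjugate A) $ i $ j
        = (\<Sum>k\<in>UNIV. det (\<chi> r. if r = j then A$i$k *s (\<chi> l. if l = k then 1 else 0) else A$r))"
      by (simp add: matrix_mul_component adjugate_def det_row_mul)
    also have "\<dots> = det (\<chi> r. if r = j then (\<Sum>k\<in>UNIV. A$i$k *s (\<chi> l. if l = k then 1 else 0)) else A$r)"
      by (rule det_linear_row_sum[symmetric]) simp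
    also have "(\<Sum>k\<in>UNIV. A$i$k *s (\<chi> l. if l = k then 1 else 0)) = A$i"
      by (simp add: vec_eq_iff if_distrib cong: if_cong)
    also have "det (\<chi> r. if r = j then A$i else A$r) = (if i = j then det A else 0)"
    proof (cases "i = j")
      case True
      then have "(\<chi> r. if r = j then A$i else A$r) = A" by (simp add: vec_eq_iff)
      with True show ?thesis by simp
    next
      case False
      then show ?thesis
        by (simp, intro det_identical_rows[of i j]) (auto simp: row_def vec_eq_iff)
    qed
    finally show ?thesis .
  qed
  then show ?thesis by (simp add: vec_eq_iff mat_def)
qed

lemma det_eq_1_adjugate:
  fixes A :: "'a::comm_ring_1^'n^'n"
  assumes "det A = 1"
  shows "A ** adjugate A = mat 1" "adjugate A ** A = mat 1" "det (adjugate A) = 1"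
proof -
  show right: "A ** adjugate A = mat 1"
    using matrix_mul_adjugate[of A] assms by simp
  have "transpose (adjugate (transpose A)) ** A = mat 1"
    using matrix_mul_adjugate[of "transpose A"] assms
    by (metis det_transpose matrix_transpose_mul transpose_mat transpose_transpose)
  moreover have "transpose (adjugate (transpose A)) = transpose (adjugate (transpose A)) ** (A ** adjugate A)"
    using right by simp
  ultimately show "adjugate A ** A = mat 1"
    by (simp add: matrix_mul_assoc)
  have "det A * det (adjugate A) = 1"
    using right det_mul[of A "adjugate A"] by simp
  with assms show "det (adjugate A) = 1" by simp
qed

lemma SL_simps [simp]:
  "carrier SL = {A. det A = 1}" "(\<otimes>\<^bsub>SL\<^esub>) = (**)" "\<one>\<^bsub>SL\<^esub> = mat 1"
  by (auto simp: SL_def)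

lemma group_SL: "group (SL :: ('a::comm_ring_1^'n^'n) monoid)"
proof (rule groupI)
  fix A :: "'a^'n^'n" assume "A \<in> carrier SL"
  then show "\<exists>B\<in>carrier SL. B \<otimes>\<^bsub>SL\<^esub> A = \<one>\<^bsub>SL\<^esub>"
    using det_eq_1_adjugate[of A] by (intro bexI[of _ "adjugate A"]) auto
qed (auto simp: det_mul matrix_mul_assoc)

lemma SL_inv: "det A = 1 \<Longrightarrow> inv\<^bsub>SL\<^esub> A = adjugate A"
  using group.inv_equality[OF group_SL, of "adjugate A" A] det_eq_1_adjugate[of A] by simp

lemma prod_one_plus_mult:
  fixes c :: "'a::comm_ring_1"
  assumes "finite S"
  shows "\<exists>k. (\<Prod>i\<in>S. 1 + c * f i) = 1 + c * sum f S + c^2 * k"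
  using assms
proof (induction S rule: finite_induct)
  case empty
  show ?case by (intro exI[of _ 0]) simp
next
  case (insert a S)
  then obtain k where k: "(\<Prod>i\<in>S. 1 + c * f i) = 1 + c * sum f S + c^2 * k"
    by blast
  have "(\<Prod>i\<in>insert a S. 1 + c * f i) = (1 + c * f a) * (1 + c * sum f S + c^2 * k)"
    using insert k by simp
  also have "\<dots> = 1 + c * sum f (insert a S) + c^2 * (k + f a * sum f S + c * f a * k)"
    using insert by (simp add: algebra_simps power2_eq_square)
  finally show ?case by blast
qed

text \<open>Only the identity permutation avoids two off-diagonal entries, each of which carries
  a factor \<open>c\<close>.\<close>
lemma det_one_plus_scale_mat:
  fixes Y :: "'a::comm_ring_1^'n^'n"
  shows "\<exists>k. det (mat 1 + scale_mat c Y) = 1 + c * trace Y + c^2 * k"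
proof -
  let ?M = "mat 1 + scale_mat c Y"
  let ?P = "{\<pi>. \<pi> permutes (UNIV :: 'n set)}"
  let ?t = "\<lambda>\<pi>. of_int (sign \<pi>) * (\<Prod>i\<in>UNIV. ?M$i$\<pi> i)"
  have c2_dvd: "c^2 dvd ?t \<pi>" if \<pi>: "\<pi> \<in> ?P - {id}" for \<pi>
  proof -
    from \<pi> obtain i where i: "\<pi> i \<noteq> i" by (auto simp: fun_eq_iff)
    define j where "j = \<pi> i"
    have ij: "i \<noteq> j" using i j_def by simp
    have j: "\<pi> j \<noteq> j"
      using i j_def permutes_inj[of \<pi> UNIV] \<pi> by (metis injD mem_Collect_eq DiffD1)
    have "(\<Prod>k\<in>UNIV. ?M$k$\<pi> k) = ?M$i$\<pi> i * (?M$j$\<pi> j * (\<Prod>k\<in>UNIV - {i} - {j}. ?M$k$\<pi> k))"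
      using ij by (simp add: prod.remove[of UNIV i] prod.remove[of "UNIV - {i}" j])
    also have "\<dots> = c^2 * (Y$i$\<pi> i * Y$j$\<pi> j * (\<Prod>k\<in>UNIV - {i} - {j}. ?M$k$\<pi> k))"
      using i j by (simp add: mat_one_component power2_eq_square ac_simps)
    finally show ?thesis by simp
  qed
  have "det ?M = ?t id + sum ?t (?P - {id})"
    unfolding det_def by (rule sum.remove) (auto simp: finite_permutations)
  moreover obtain k1 where "sum ?t (?P - {id}) = c^2 * k1"
    using dvd_sum[of "?P - {id}" "c^2" ?t] c2_dvd by auto
  moreover obtain k2 where "(\<Prod>i\<in>UNIV. 1 + c * Y$i$i) = 1 + c * trace Y + c^2 * k2"
    using prod_one_plus_mult[of UNIV c "\<lambda>i. Y$i$i"] by (auto simp: trace_def)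
  moreover have "?t id = (\<Prod>i\<in>UNIV. 1 + c * Y$i$i)"
    by (simp add: mat_one_component)
  ultimately have "det ?M = 1 + c * trace Y + c^2 * (k2 + k1)"
    by (simp add: algebra_simps)
  then show ?thesis by blast
qed

lemma det_add_row_multiple:
  fixes A :: "'a::comm_ring_1^'n^'n"
  assumes "i \<noteq> j"
  shows "det (\<chi> k l. if k = i then A$i$l + c * A$j$l else A$k$l) = det A"
proof -
  have "(\<chi> k l. if k = i then A$i$l + c * A$j$l else A$k$l)
      = (\<chi> k. if k = i then row i A + c *s row j A else row k A)"
    by (simp add: vec_eq_iff row_def)
  then show ?thesis
    using det_row_operation[OF assms, of A c] by simp
qed

definition elementary_mat :: "'n::finite \<Rightarrow> 'n \<Rightarrow> 'a::comm_ring_1 \<Rightarrow> 'a^'n^'n" where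
  "elementary_mat k l a = (\<chi> i j. if i = k \<and> j = l then a else 0)"

lemma elementary_mat_component:
  "elementary_mat k l a $ i $ j = (if i = k \<and> j = l then a else 0)"
  by (simp add: elementary_mat_def)

text \<open>The matrix \<open>a (e\<^sub>k - e\<^sub>l)(e\<^sub>k + e\<^sub>l)\<^sup>T\<close>. Up to the elementary matrices \<open>a e\<^sub>k\<^sub>l\<close> and
  \<open>-a e\<^sub>l\<^sub>k\<close> it is the traceless diagonal \<open>a (e\<^sub>k\<^sub>k - e\<^sub>l\<^sub>l)\<close>.\<close>
definition diag_pair_mat :: "'n::finite \<Rightarrow> 'n \<Rightarrow> 'a::comm_ring_1 \<Rightarrow> 'a^'n^'n" where
  "diag_pair_mat k l a = (\<chi> i j. if i = k \<and> j = k then a else if i = k \<and> j = l then a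
                    else if i = l \<and> j = k then - a else if i = l \<and> j = l then - a else 0)"

lemma det_one_plus_elementary_mat:
  assumes "k \<noteq> l"
  shows "det (mat 1 + scale_mat c (elementary_mat k l a)) = 1"
proof -
  have "mat 1 + scale_mat c (elementary_mat k l a)
      = (\<chi> s t. if s = k then mat 1$k$t + (c * a) * mat 1$l$t else mat 1$s$t)"
    using assms by (auto simp: vec_eq_iff elementary_mat_component mat_one_component)
  then show ?thesis
    using det_add_row_multiple[OF assms, of "mat 1" "c * a"] by simp
qed

lemma det_one_plus_diag_pair_mat:
  fixes k l :: "'n::finite" and a c :: "'a::comm_ring_1"
  assumes kl: "k \<noteq> l"
  shows "det (mat 1 + scale_mat c (diag_pair_mat k l a)) = 1"
proof -
  let ?F = "mat 1 + scale_mat c (diag_pair_mat k l a)"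
  let ?R1 = "(\<chi> s t. if s = k then ?F$k$t + 1 * ?F$l$t else ?F$s$t) :: 'a^'n^'n"
  let ?R2 = "(\<chi> s t. if s = l then ?R1$l$t + (c * a) * ?R1$k$t else ?R1$s$t) :: 'a^'n^'n"
  let ?R3 = "(\<chi> s t. if s = k then ?R2$k$t + (- 1) * ?R2$l$t else ?R2$s$t) :: 'a^'n^'n"
  have "det ?R3 = det ?F"
    using kl det_add_row_multiple[of k l ?F] det_add_row_multiple[of l k ?R1]
      det_add_row_multiple[of k l ?R2] by simp
  moreover have "?R3 = mat 1"
    using kl by (auto simp: vec_eq_iff diag_pair_mat_def mat_one_component algebra_simps)
  ultimately show ?thesis by simp
qed

section \<open>Reduction of matrices modulo \<open>m\<close>\<close>

definition residue_mat :: "nat \<Rightarrow> 'a::comm_ring_1^'n^'n \<Rightarrow> 'n \<Rightarrow> 'n \<Rightarrow> 'a set" where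
  "residue_mat m A = (\<lambda>i j. residue m (A$i$j))"

lemma residue_mat_eq_iff:
  "residue_mat m A = residue_mat m B \<longleftrightarrow> (\<forall>i j. A$i$j - B$i$j \<in> mult_ideal m)"
  by (simp add: residue_mat_def fun_eq_iff residue_eq_iff)

lemma residue_mat_add:
  "residue_mat m A \<otimes>\<^bsub>sl_add (Rmodp m)\<^esub> residue_mat m B = residue_mat m (A + B)"
  by (simp add: residue_mat_def sl_add_simps residue_hom_simps)

lemma residue_mat_in_sl_add_iff:
  "residue_mat m A \<in> carrier (sl_add (Rmodp m)) \<longleftrightarrow> trace A \<in> mult_ideal m"
  by (auto simp: residue_mat_def sl_add_simps carrier_Rmodp residue_hom_simps trace_def
      residue_eq_iff)

lemma sl_add_Rmodp_lift:
  fixes a :: "'n::finite \<Rightarrow> 'n \<Rightarrow> 'a::comm_ring_1 set"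
  assumes "a \<in> carrier (sl_add (Rmodp m))"
  obtains Y :: "'a^'n^'n" where "a = residue_mat m Y" "trace Y \<in> mult_ideal m"
proof -
  have "\<forall>i j. \<exists>y. a i j = residue m y"
    using assms by (auto simp: sl_add_simps carrier_Rmodp image_iff)
  then obtain y where "\<And>i j. a i j = residue m (y i j)"
    by metis
  then have "a = residue_mat m (\<chi> i j. y i j)"
    by (simp add: residue_mat_def fun_eq_iff)
  with assms that show thesis
    using residue_mat_in_sl_add_iff by blast
qed

lemma sl_bracket_residue_mat:
  "sl_bracket (Rmodp m) (residue_mat m Y) (residue_mat m Z) = residue_mat m (Y ** Z - Z ** Y)"
  by (simp add: sl_bracket_def residue_mat_def residue_hom_simps matrix_mul_component)

lemma sl_bracket_closed:
  fixes a b :: "'n::finite \<Rightarrow> 'n \<Rightarrow> 'a::comm_ring_1 set"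
  assumes "a \<in> carrier (sl_add (Rmodp m))" and "b \<in> carrier (sl_add (Rmodp m))"
  shows "sl_bracket (Rmodp m) a b \<in> carrier (sl_add (Rmodp m))"
proof -
  obtain Y :: "'a^'n^'n" where "a = residue_mat m Y"
    using sl_add_Rmodp_lift[OF assms(1)] by metis
  moreover obtain Z :: "'a^'n^'n" where "b = residue_mat m Z"
    using sl_add_Rmodp_lift[OF assms(2)] by metis
  moreover have "trace (Y ** Z - Z ** Y) \<in> mult_ideal m"
    using of_nat_mult_in_mult_ideal[of m 0] by (simp add: trace_sub trace_mul_sym[of Y Z])
  ultimately show ?thesis
    by (simp add: sl_bracket_residue_mat residue_mat_in_sl_add_iff)
qed

lemma residue_mat_sum:
  assumes "finite S" "\<And>s. s \<in> S \<Longrightarrow> trace (f s) \<in> mult_ideal m"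
  shows "residue_mat m (sum f S)
    = finprod (sl_add (Rmodp m) :: ('n::finite \<Rightarrow> 'n \<Rightarrow> 'a::comm_ring_1 set) monoid) (\<lambda>s. residue_mat m (f s)) S"
  using assms
proof (induction S rule: finite_induct)
  case empty
  interpret sl: comm_group "sl_add (Rmodp m) :: ('n \<Rightarrow> 'n \<Rightarrow> 'a set) monoid"
    by (rule cring.comm_group_sl_add[OF cring_Rmodp])
  show ?case
    by (simp add: residue_mat_def sl_add_simps residue_hom_simps fun_eq_iff)
next
  case (insert s S)
  interpret sl: comm_group "sl_add (Rmodp m) :: ('n \<Rightarrow> 'n \<Rightarrow> 'a set) monoid"
    by (rule cring.comm_group_sl_add[OF cring_Rmodp])
  have "(\<lambda>s. residue_mat m (f s)) \<in> insert s S \<rightarrow> carrier (sl_add (Rmodp m))"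
    using insert.prems by (simp add: residue_mat_in_sl_add_iff)
  with insert show ?case
    by (simp add: residue_mat_add[symmetric])
qed

lemma sum_off_diagonal_elementary_mat_component:
  fixes Y :: "'a::comm_ring_1^'n::finite^'n"
  shows "(\<Sum>s\<in>{s. fst s \<noteq> snd s}. elementary_mat (fst s) (snd s) (Y $ fst s $ snd s) $ i $ j)
      = (if i = j then 0 else Y$i$j)"
proof -
  have "(\<Sum>s\<in>{s. fst s \<noteq> snd s}. elementary_mat (fst s) (snd s) (Y $ fst s $ snd s) $ i $ j)
      = (\<Sum>s\<in>{s. fst s \<noteq> snd s}. if s = (i, j) then Y$i$j else 0)"
    by (intro sum.cong) (auto simp: elementary_mat_component)
  also have "\<dots> = (if i = j then 0 else Y$i$j)"
    by simp
  finally show ?thesis .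
qed

text \<open>The entry at \<open>(i\<^sub>0, i\<^sub>0)\<close> collects \<open>-\<Sum>\<^sub>k\<^sub>\<noteq>\<^sub>i\<^sub>0 Y\<^sub>k\<^sub>k = Y\<^sub>i\<^sub>0\<^sub>i\<^sub>0 - trace Y\<close>.\<close>
lemma sum_diagonal_elementary_mat_component:
  fixes Y :: "'a::comm_ring_1^'n::finite^'n" and i0 :: 'n
  shows "(\<Sum>k\<in>UNIV - {i0}. (elementary_mat k k (Y$k$k) - elementary_mat i0 i0 (Y$k$k)) $ i $ j)
      = (if j = i then Y$i$j else 0) - elementary_mat i0 i0 (trace Y) $ i $ j"
proof (cases "j = i")
  case False
  then have "(\<Sum>k\<in>UNIV - {i0}. (elementary_mat k k (Y$k$k) - elementary_mat i0 i0 (Y$k$k)) $ i $ j) = 0"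
    by (intro sum.neutral) (auto simp: elementary_mat_component)
  with False show ?thesis
    by (auto simp: elementary_mat_component)
next
  case j: True
  have trace: "trace Y = Y$i0$i0 + (\<Sum>k\<in>UNIV - {i0}. Y$k$k)"
    unfolding trace_def by (rule sum.remove) auto
  show ?thesis
  proof (cases "i = i0")
    case True
    have "(\<Sum>k\<in>UNIV - {i0}. (elementary_mat k k (Y$k$k) - elementary_mat i0 i0 (Y$k$k)) $ i $ j)
        = (\<Sum>k\<in>UNIV - {i0}. - Y$k$k)"
      using j True by (intro sum.cong) (auto simp: elementary_mat_component)
    with j True trace show ?thesis
      by (simp add: sum_negf elementary_mat_component)
  next
    case False
    have "(\<Sum>k\<in>UNIV - {i0}. (elementary_mat k k (Y$k$k) - elementary_mat i0 i0 (Y$k$k)) $ i $ j)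
        = (\<Sum>k\<in>UNIV - {i0}. if k = i then Y$i$i else 0)"
      using j False by (intro sum.cong) (auto simp: elementary_mat_component)
    with j False show ?thesis
      by (simp add: elementary_mat_component)
  qed
qed

lemma sum_elementary_mat_decomposition:
  fixes Y :: "'a::comm_ring_1^'n::finite^'n" and i0 :: 'n
  shows "(\<Sum>s\<in>{s. fst s \<noteq> snd s}. elementary_mat (fst s) (snd s) (Y $ fst s $ snd s))
       + (\<Sum>k\<in>UNIV - {i0}. elementary_mat k k (Y$k$k) - elementary_mat i0 i0 (Y$k$k))
       = Y - elementary_mat i0 i0 (trace Y)"
proof (intro vec_eq_iff[THEN iffD2] allI)
  fix i j
  show "((\<Sum>s\<in>{s. fst s \<noteq> snd s}. elementary_mat (fst s) (snd s) (Y $ fst s $ snd s))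
       + (\<Sum>k\<in>UNIV - {i0}. elementary_mat k k (Y$k$k) - elementary_mat i0 i0 (Y$k$k))) $ i $ j
       = (Y - elementary_mat i0 i0 (trace Y)) $ i $ j"
    unfolding vector_add_component sum_component sum_off_diagonal_elementary_mat_component
      sum_diagonal_elementary_mat_component by auto
qed

lemma zero_in_mult_ideal [simp]: "0 \<in> mult_ideal m"
  using of_nat_mult_in_mult_ideal[of m 0] by simp

lemma trace_elementary_mat: "trace (elementary_mat k l a) = (if k = l then a else 0)"
  by (cases "k = l") (auto simp: trace_def elementary_mat_component intro!: sum.neutral)

lemma subgroup_sl_add_Rmodp_eq_carrier:
  fixes H :: "('n::finite \<Rightarrow> 'n \<Rightarrow> 'a::comm_ring_1 set) set"
  assumes H: "subgroup H (sl_add (Rmodp m))"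
    and off_diag: "\<And>k l a. k \<noteq> l \<Longrightarrow> residue_mat m (elementary_mat k l a) \<in> H"
    and diag: "\<And>k l a. k \<noteq> l \<Longrightarrow> residue_mat m (elementary_mat k k a - elementary_mat l l a) \<in> H"
  shows "H = carrier (sl_add (Rmodp m))"
proof
  interpret sl: comm_group "sl_add (Rmodp m) :: ('n \<Rightarrow> 'n \<Rightarrow> 'a set) monoid"
    by (rule cring.comm_group_sl_add[OF cring_Rmodp])
  show "H \<subseteq> carrier (sl_add (Rmodp m))"
    using H by (rule subgroup.subset)
  show "carrier (sl_add (Rmodp m)) \<subseteq> H"
  proof
    fix M assume "M \<in> carrier (sl_add (Rmodp m) :: ('n \<Rightarrow> 'n \<Rightarrow> 'a set) monoid)"
    then obtain Y :: "'a^'n^'n" where Y: "M = residue_mat m Y" "trace Y \<in> mult_ideal m"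
      by (rule sl_add_Rmodp_lift)
    define i0 :: 'n where "i0 = undefined"
    let ?S = "{s :: 'n \<times> 'n. fst s \<noteq> snd s}" and ?T = "UNIV - {i0}"
    let ?e = "\<lambda>s. elementary_mat (fst s) (snd s) (Y $ fst s $ snd s)"
    let ?d = "\<lambda>k. elementary_mat k k (Y$k$k) - elementary_mat i0 i0 (Y$k$k)"
    have "M = residue_mat m (Y - elementary_mat i0 i0 (trace Y))"
      using Y by (simp add: residue_mat_eq_iff elementary_mat_component)
    also have "\<dots> = residue_mat m (sum ?e ?S + sum ?d ?T)"
      by (simp only: sum_elementary_mat_decomposition)
    also have "\<dots> = finprod (sl_add (Rmodp m)) (\<lambda>s. residue_mat m (?e s)) ?S
        \<otimes>\<^bsub>sl_add (Rmodp m)\<^esub> finprod (sl_add (Rmodp m)) (\<lambda>k. residue_mat m (?d k)) ?T"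
    proof -
      have "residue_mat m (sum ?e ?S) = finprod (sl_add (Rmodp m)) (\<lambda>s. residue_mat m (?e s)) ?S"
        by (rule residue_mat_sum) (auto simp: trace_elementary_mat)
      moreover have "residue_mat m (sum ?d ?T) = finprod (sl_add (Rmodp m)) (\<lambda>k. residue_mat m (?d k)) ?T"
        by (rule residue_mat_sum) (auto simp: trace_elementary_mat trace_sub)
      ultimately show ?thesis
        by (simp flip: residue_mat_add)
    qed
    also have "\<dots> \<in> H"
      using off_diag diag
      by (intro subgroup.m_closed[OF H] sl.subgroup_finprod_closed[OF H]) auto
    finally show "M \<in> H" .
  qed
qed

section \<open>Principal congruence subgroups\<close>

lemma of_nat_power_mult_in_mult_ideal:
  assumes "1 \<le> r"
  shows "of_nat m ^ r * x \<in> mult_ideal m"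
proof -
  have "of_nat m ^ r * x = of_nat m * (of_nat m ^ (r - 1) * x)"
    using assms by (simp add: power_eq_if)
  then show ?thesis
    by (simp add: of_nat_mult_in_mult_ideal)
qed

lemma residue_mat_add_scale_mat:
  "1 \<le> r \<Longrightarrow> residue_mat m (A + scale_mat (of_nat m ^ r) B) = residue_mat m A"
  by (simp add: residue_mat_eq_iff of_nat_power_mult_in_mult_ideal)

lemma Gam_iff: "A \<in> Gam p r \<longleftrightarrow> det A = 1 \<and> (\<exists>Y. A = mat 1 + scale_mat (of_nat p ^ r) Y)"
proof
  assume A: "A \<in> Gam p r"
  then have "\<forall>i j. \<exists>y. A$i$j - mat 1$i$j = of_nat (p ^ r) * y"
    by (auto simp: Gam_def mult_ideal_def)
  then obtain y where "\<And>i j. A$i$j - mat 1$i$j = of_nat p ^ r * y i j"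
    by (metis of_nat_power)
  then have "A = mat 1 + scale_mat (of_nat p ^ r) (\<chi> i j. y i j)"
    by (simp add: vec_eq_iff algebra_simps)
  with A show "det A = 1 \<and> (\<exists>Y. A = mat 1 + scale_mat (of_nat p ^ r) Y)"
    by (auto simp: Gam_def)
next
  assume "det A = 1 \<and> (\<exists>Y. A = mat 1 + scale_mat (of_nat p ^ r) Y)"
  then show "A \<in> Gam p r"
    by (auto simp: Gam_def mult_ideal_def)
qed

lemma mat_one_in_Gam: "mat 1 \<in> Gam p r"
  using Gam_iff[of "mat 1"] by (metis det_I add_0_right scale_mat_zero)

lemma one_plus_scale_mat_mult:
  "(mat 1 + scale_mat c Y) ** (mat 1 + scale_mat c Z)
     = mat 1 + scale_mat (c::'a::comm_ring_1) (Y + Z + scale_mat c (Y ** Z))"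
  by (simp add: matrix_add_ldistrib matrix_add_rdistrib scale_mat_matrix_mul_left
      scale_mat_matrix_mul_right scale_mat_scale_mat scale_mat_add)

lemma one_plus_scale_mat_commutator:
  "(mat 1 + scale_mat a Y) ** (mat 1 + scale_mat b Z) - (mat 1 + scale_mat b Z) ** (mat 1 + scale_mat a Y)
     = scale_mat (a * b :: 'a::comm_ring_1) (Y ** Z - Z ** Y)"
  by (simp add: matrix_add_ldistrib matrix_add_rdistrib scale_mat_matrix_mul_left
      scale_mat_matrix_mul_right scale_mat_scale_mat scale_mat_diff scale_mat_add mult.commute)

lemma subgroup_Gam: "subgroup (Gam p r) (SL :: ('a::comm_ring_1^'n^'n) monoid)"
proof (rule group.subgroupI[OF group_SL])
  show "Gam p r \<subseteq> carrier (SL :: ('a^'n^'n) monoid)"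
    by (auto simp: Gam_def)
  show "Gam p r \<noteq> ({} :: ('a^'n^'n) set)"
    using mat_one_in_Gam by blast
next
  fix A :: "'a^'n^'n" assume "A \<in> Gam p r"
  then obtain Y where Y: "A = mat 1 + scale_mat (of_nat p ^ r) Y" and det: "det A = 1"
    by (auto simp: Gam_iff)
  have "mat 1 = adjugate A ** A"
    using det_eq_1_adjugate[OF det] by simp
  also have "\<dots> = adjugate A + scale_mat (of_nat p ^ r) (adjugate A ** Y)"
    by (simp add: Y matrix_add_ldistrib scale_mat_matrix_mul_right)
  finally have "adjugate A = mat 1 + scale_mat (of_nat p ^ r) (- (adjugate A ** Y))"
    by (simp add: scale_mat_uminus algebra_simps)
  then show "inv\<^bsub>SL\<^esub> A \<in> Gam p r"
    using SL_inv[OF det] det_eq_1_adjugate[OF det] by (auto simp: Gam_iff)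
next
  fix A B :: "'a^'n^'n" assume "A \<in> Gam p r" "B \<in> Gam p r"
  then show "A \<otimes>\<^bsub>SL\<^esub> B \<in> Gam p r"
    using one_plus_scale_mat_mult by (auto simp: Gam_iff det_mul)
qed

lemma Gam_antimono: "r \<le> r' \<Longrightarrow> Gam p r' \<subseteq> (Gam p r :: ('a::comm_ring_1^'n::finite^'n) set)"
proof
  fix A :: "'a^'n^'n" assume r: "r \<le> r'" and "A \<in> Gam p r'"
  then obtain Y where Y: "A = mat 1 + scale_mat (of_nat p ^ r') Y" "det A = 1"
    by (auto simp: Gam_iff)
  have "of_nat p ^ r' = of_nat p ^ r * (of_nat p ^ (r' - r) :: 'a)"
    using r by (simp flip: power_add)
  with Y have "A = mat 1 + scale_mat (of_nat p ^ r) (scale_mat (of_nat p ^ (r' - r)) Y)"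
    by (simp add: scale_mat_scale_mat)
  with Y(2) show "A \<in> Gam p r"
    unfolding Gam_iff by blast
qed

lemma grp_comm_one_plus_scale_mat:
  fixes A B :: "'a::comm_ring_1^'n^'n"
  assumes "det A = 1" "det B = 1" "A = mat 1 + scale_mat a Y" "B = mat 1 + scale_mat b Z"
  shows "grp_comm A B = mat 1 + scale_mat (a * b) (adjugate (B ** A) ** (Y ** Z - Z ** Y))"
proof -
  interpret SL: group "SL :: ('a^'n^'n) monoid" by (rule group_SL)
  have in_SL: "A \<in> carrier SL" "B \<in> carrier SL"
    using assms(1,2) by simp_all
  have det_BA: "det (B ** A) = 1"
    using assms(1,2) by (simp add: det_mul)
  have commutator: "A ** B - B ** A = scale_mat (a * b) (Y ** Z - Z ** Y)"
    using one_plus_scale_mat_commutator[of a Y b Z] assms(3,4) by simp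
  have "grp_comm A B = inv\<^bsub>SL\<^esub> (B \<otimes>\<^bsub>SL\<^esub> A) \<otimes>\<^bsub>SL\<^esub> (A \<otimes>\<^bsub>SL\<^esub> B)"
    using SL.inv_mult_group[OF in_SL(2,1)] by (simp add: grp_comm_def matrix_mul_assoc)
  also have "\<dots> = adjugate (B ** A) ** (B ** A) + adjugate (B ** A) ** (A ** B - B ** A)"
    using SL_inv[OF det_BA] by (simp flip: matrix_add_ldistrib)
  also have "\<dots> = mat 1 + scale_mat (a * b) (adjugate (B ** A) ** (Y ** Z - Z ** Y))"
    using det_eq_1_adjugate(2)[OF det_BA] by (simp add: commutator scale_mat_matrix_mul_right)
  finally show ?thesis .
qed

section \<open>The graded pieces \<open>\<Gamma>\<^sub>r/\<Gamma>\<^sub>r\<^sub>+\<^sub>1\<close>\<close>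

text \<open>\<open>level_coord p r A\<close> is meaningful only for \<open>A \<in> \<Gamma>\<^sub>r\<close>, and unique only when \<open>p\<close> is not
  a zero divisor of \<open>R\<close>.\<close>
definition level_coord :: "nat \<Rightarrow> nat \<Rightarrow> 'a::comm_ring_1^'n^'n \<Rightarrow> 'a^'n^'n" where
  "level_coord p r A = (SOME Y. A = mat 1 + scale_mat (of_nat p ^ r) Y)"

definition level_residue :: "nat \<Rightarrow> nat \<Rightarrow> 'a::comm_ring_1^'n^'n \<Rightarrow> 'n \<Rightarrow> 'n \<Rightarrow> 'a set" where
  "level_residue p r A = residue_mat p (level_coord p r A)"

definition gr_piece_to_sl :: "nat \<Rightarrow> nat \<Rightarrow> ('a::comm_ring_1^'n::finite^'n) set \<Rightarrow> 'n \<Rightarrow> 'n \<Rightarrow> 'a set" where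
  "gr_piece_to_sl p r C = the_elem (level_residue p r ` C)"

definition sl_to_gr_piece :: "nat \<Rightarrow> nat \<Rightarrow> ('n::finite \<Rightarrow> 'n \<Rightarrow> 'a::comm_ring_1 set) \<Rightarrow> ('a^'n^'n) set" where
  "sl_to_gr_piece p r = inv_into (carrier (gr_piece p r)) (gr_piece_to_sl p r)"

definition loop_to_gr :: "nat \<Rightarrow> (nat \<Rightarrow> 'n::finite \<Rightarrow> 'n \<Rightarrow> 'a::comm_ring_1 set) \<Rightarrow> nat \<Rightarrow> ('a^'n^'n) set" where
  "loop_to_gr p x = (\<lambda>k\<in>pos_degrees. sl_to_gr_piece p k (x k))"

context
  fixes p :: nat
  assumes no_p_torsion: "\<And>x :: 'a::comm_ring_1. of_nat p * x = 0 \<Longrightarrow> x = 0"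
begin

lemma of_nat_power_mult_cancel: "of_nat p ^ r * x = of_nat p ^ r * (y :: 'a) \<Longrightarrow> x = y"
proof (induction r)
  case (Suc r)
  then have "of_nat p * (of_nat p ^ r * x - of_nat p ^ r * y) = 0"
    by (simp add: algebra_simps)
  then have "of_nat p ^ r * x - of_nat p ^ r * y = 0"
    by (rule no_p_torsion)
  then show ?case
    by (simp add: Suc.IH)
qed simp

lemma level_coord_eq:
  fixes Y :: "'a^'n^'n"
  assumes A: "A = mat 1 + scale_mat (of_nat p ^ r) Y"
  shows "level_coord p r A = Y"
proof -
  have "A = mat 1 + scale_mat (of_nat p ^ r) (level_coord p r A)"
    unfolding level_coord_def using A by (rule someI)
  then have "mat 1 + scale_mat (of_nat p ^ r) (level_coord p r A) = mat 1 + scale_mat (of_nat p ^ r) Y"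
    using A by (rule trans[OF sym])
  then have "scale_mat (of_nat p ^ r) (level_coord p r A) = scale_mat (of_nat p ^ r) Y"
    by (rule add_left_imp_eq)
  then have "scale_mat (of_nat p ^ r) (level_coord p r A) $ i $ j = scale_mat (of_nat p ^ r) Y $ i $ j" for i j
    by simp
  then have "of_nat p ^ r * level_coord p r A $ i $ j = of_nat p ^ r * Y $ i $ j" for i j
    by simp
  then show ?thesis
    by (intro vec_eq_iff[THEN iffD2] allI) (rule of_nat_power_mult_cancel)
qed

lemma level_coord:
  fixes A :: "'a^'n^'n"
  assumes "A \<in> Gam p r"
  shows "A = mat 1 + scale_mat (of_nat p ^ r) (level_coord p r A)"
proof -
  obtain Y where Y: "A = mat 1 + scale_mat (of_nat p ^ r) Y"
    using assms by (auto simp: Gam_iff)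
  show ?thesis
    by (subst level_coord_eq[OF Y]) (rule Y)
qed

lemma level_residue_one_plus:
  fixes W :: "'a^'n^'n"
  shows "level_residue p r (mat 1 + scale_mat (of_nat p ^ r) W) = residue_mat p W"
  unfolding level_residue_def level_coord_eq[OF refl] ..

lemma level_residue_mult:
  fixes A B :: "'a^'n^'n"
  assumes "1 \<le> r" "A \<in> Gam p r" "B \<in> Gam p r"
  shows "level_residue p r (A ** B) = level_residue p r A \<otimes>\<^bsub>sl_add (Rmodp p)\<^esub> level_residue p r B"
proof -
  obtain Y Z where A: "A = mat 1 + scale_mat (of_nat p ^ r) Y" and B: "B = mat 1 + scale_mat (of_nat p ^ r) Z"
    using assms(2,3) by (auto simp: Gam_iff)
  then have "A ** B = mat 1 + scale_mat (of_nat p ^ r) (Y + Z + scale_mat (of_nat p ^ r) (Y ** Z))"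
    by (simp only: one_plus_scale_mat_mult)
  then have "level_residue p r (A ** B) = residue_mat p (Y + Z + scale_mat (of_nat p ^ r) (Y ** Z))"
    by (simp only: level_residue_one_plus)
  also have "\<dots> = residue_mat p Y \<otimes>\<^bsub>sl_add (Rmodp p)\<^esub> residue_mat p Z"
    by (simp only: residue_mat_add_scale_mat[OF assms(1)] residue_mat_add)
  also have "\<dots> = level_residue p r A \<otimes>\<^bsub>sl_add (Rmodp p)\<^esub> level_residue p r B"
    by (simp only: A B level_residue_one_plus)
  finally show ?thesis .
qed

text \<open>\<open>det (1 + p\<^sup>r Y) = 1\<close> forces \<open>p\<^sup>r trace Y \<in> p\<^sup>2\<^sup>r R\<close>, and \<open>p\<^sup>r\<close> cancels.\<close>
lemma trace_level_coord:
  fixes A :: "'a^'n^'n"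
  assumes "1 \<le> r" "A \<in> Gam p r"
  shows "trace (level_coord p r A) \<in> mult_ideal p"
proof -
  obtain Y where A: "A = mat 1 + scale_mat (of_nat p ^ r) Y" and det: "det A = 1"
    using assms(2) by (auto simp: Gam_iff)
  obtain k where "det A = 1 + of_nat p ^ r * trace Y + (of_nat p ^ r)^2 * k"
    unfolding A using det_one_plus_scale_mat by blast
  with det have "of_nat p ^ r * trace Y = - ((of_nat p ^ r)^2 * k)"
    by (simp add: eq_neg_iff_add_eq_0)
  then have "of_nat p ^ r * trace Y = of_nat p ^ r * (- (of_nat p ^ r * k))"
    by (simp add: power2_eq_square)
  then have "trace Y = - (of_nat p ^ r * k)"
    by (rule of_nat_power_mult_cancel)
  then show ?thesis
    using mult_ideal_uminus[OF of_nat_power_mult_in_mult_ideal[OF assms(1)]] level_coord_eq[OF A]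
    by simp
qed

lemma level_residue_in_sl_add:
  fixes A :: "'a^'n^'n"
  assumes "1 \<le> r" "A \<in> Gam p r"
  shows "level_residue p r A \<in> carrier (sl_add (Rmodp p))"
  using trace_level_coord[OF assms] by (simp add: level_residue_def residue_mat_in_sl_add_iff)

lemma group_hom_level_residue:
  assumes "1 \<le> r"
  shows "group_hom (SL\<lparr>carrier := Gam p r\<rparr>) (sl_add (Rmodp p) :: ('n::finite \<Rightarrow> 'n \<Rightarrow> 'a set) monoid)
      (level_residue p r)"
proof -
  have "group (SL\<lparr>carrier := Gam p r\<rparr> :: ('a^'n^'n) monoid)"
    by (rule subgroup.subgroup_is_group[OF subgroup_Gam group_SL])
  moreover have "group (sl_add (Rmodp p) :: ('n \<Rightarrow> 'n \<Rightarrow> 'a set) monoid)"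
    using cring.comm_group_sl_add[OF cring_Rmodp] by (rule comm_group.axioms(2))
  ultimately show ?thesis
    using level_residue_in_sl_add level_residue_mult assms
    by (auto simp: group_hom_def group_hom_axioms_def hom_def)
qed

lemma Gam_Suc_iff:
  fixes A :: "'a^'n^'n"
  shows "A \<in> Gam p (Suc r) \<longleftrightarrow> A \<in> Gam p r \<and> (\<forall>i j. level_coord p r A $ i $ j \<in> mult_ideal p)"
proof
  assume "A \<in> Gam p (Suc r)"
  then obtain W where W: "A = mat 1 + scale_mat (of_nat p ^ r) (scale_mat (of_nat p) W)" "det A = 1"
    by (auto simp: Gam_iff scale_mat_scale_mat mult.commute)
  then have "A \<in> Gam p r"
    unfolding Gam_iff by blast
  with level_coord_eq[OF W(1)] show "A \<in> Gam p r \<and> (\<forall>i j. level_coord p r A $ i $ j \<in> mult_ideal p)"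
    by (simp add: of_nat_mult_in_mult_ideal)
next
  assume A: "A \<in> Gam p r \<and> (\<forall>i j. level_coord p r A $ i $ j \<in> mult_ideal p)"
  then obtain Y where Y: "A = mat 1 + scale_mat (of_nat p ^ r) Y" "det A = 1"
    by (auto simp: Gam_iff)
  with A have "\<forall>i j. \<exists>w. Y $ i $ j = of_nat p * w"
    using level_coord_eq[OF Y(1)] by (simp add: mult_ideal_iff)
  then obtain w where "\<And>i j. Y $ i $ j = of_nat p * w i j"
    by metis
  with Y(1) have "A = mat 1 + scale_mat (of_nat p ^ Suc r) (\<chi> i j. w i j)"
    by (simp add: vec_eq_iff mult.assoc)
  with Y(2) show "A \<in> Gam p (Suc r)"
    unfolding Gam_iff by blast
qed

lemma kernel_level_residue:
  "kernel (SL\<lparr>carrier := Gam p r\<rparr>) (sl_add (Rmodp p)) (level_residue p r)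
     = (Gam p (r + 1) :: ('a^'n::finite^'n) set)"
proof -
  have "level_residue p r A = \<one>\<^bsub>sl_add (Rmodp p)\<^esub>
      \<longleftrightarrow> (\<forall>i j. level_coord p r A $ i $ j \<in> mult_ideal p)" for A :: "'a^'n^'n"
    by (simp add: level_residue_def residue_mat_def sl_add_simps fun_eq_iff residue_eq_zero_iff)
  then show ?thesis
    by (auto simp: kernel_def Gam_Suc_iff)
qed

lemma level_residue_image:
  assumes "1 \<le> r"
  shows "level_residue p r ` Gam p r = (carrier (sl_add (Rmodp p)) :: ('n::finite \<Rightarrow> 'n \<Rightarrow> 'a set) set)"
proof -
  let ?H = "level_residue p r ` Gam p r :: ('n \<Rightarrow> 'n \<Rightarrow> 'a set) set"
  have H: "subgroup ?H (sl_add (Rmodp p))"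
    using group_hom.img_is_subgroup[OF group_hom_level_residue[OF assms]] by simp
  have lift: "residue_mat p W \<in> ?H" if "det (mat 1 + scale_mat (of_nat p ^ r) W) = 1" for W :: "'a^'n^'n"
  proof -
    have "mat 1 + scale_mat (of_nat p ^ r) W \<in> Gam p r"
      using that by (auto simp: Gam_iff)
    then have "level_residue p r (mat 1 + scale_mat (of_nat p ^ r) W) \<in> ?H"
      by (rule imageI)
    then show ?thesis
      by (simp only: level_residue_one_plus)
  qed
  have off_diag: "residue_mat p (elementary_mat k l a) \<in> ?H" if "k \<noteq> l" for k l :: 'n and a
    using lift det_one_plus_elementary_mat[OF that] by blast
  have diag: "residue_mat p (elementary_mat k k a - elementary_mat l l a) \<in> ?H" if "k \<noteq> l" for k l :: 'n and a
  proof -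
    have "elementary_mat k k a - elementary_mat l l a
        = diag_pair_mat k l a + elementary_mat k l (- a) + elementary_mat l k a"
      using that by (auto simp: vec_eq_iff diag_pair_mat_def elementary_mat_component)
    then show ?thesis
      using lift[OF det_one_plus_diag_pair_mat[OF that]] off_diag[OF that] off_diag[of l k] that
        subgroup.m_closed[OF H] by (simp flip: residue_mat_add)
  qed
  show ?thesis
    using subgroup_sl_add_Rmodp_eq_carrier[OF H off_diag diag] by blast
qed

lemma level_residue_grp_comm:
  fixes A B :: "'a^'n^'n"
  assumes r: "1 \<le> r" and s: "1 \<le> s" and A: "A \<in> Gam p r" and B: "B \<in> Gam p s"
  shows "grp_comm A B \<in> Gam p (r + s)"
    and "level_residue p (r + s) (grp_comm A B)
           = sl_bracket (Rmodp p) (level_residue p r A) (level_residue p s B)"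
proof -
  interpret SL: group "SL :: ('a^'n^'n) monoid" by (rule group_SL)
  let ?Y = "level_coord p r A" and ?Z = "level_coord p s B"
  let ?K = "?Y ** ?Z - ?Z ** ?Y"
  have in_SL: "A \<in> carrier SL" "B \<in> carrier SL"
    using A B by (auto simp: Gam_def)
  have C: "grp_comm A B = mat 1 + scale_mat (of_nat p ^ (r + s)) (adjugate (B ** A) ** ?K)"
    using grp_comm_one_plus_scale_mat[OF _ _ level_coord[OF A] level_coord[OF B]] in_SL
    unfolding power_add by simp
  have "grp_comm A B \<in> carrier SL"
    unfolding grp_comm_def by (intro SL.m_closed SL.inv_closed in_SL)
  with C show "grp_comm A B \<in> Gam p (r + s)"
    by (auto simp: Gam_iff)
  have A1: "A \<in> Gam p 1" and B1: "B \<in> Gam p 1"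
    using Gam_antimono[of 1 r p] Gam_antimono[of 1 s p] r s A B by blast+
  have BA: "B ** A \<in> Gam p 1"
    using subgroup.m_closed[OF subgroup_Gam B1 A1] by simp
  then have "det (B ** A) = 1"
    by (simp add: Gam_def)
  then have "adjugate (B ** A) \<in> Gam p 1"
    using subgroup.m_inv_closed[OF subgroup_Gam BA] by (simp add: SL_inv)
  then obtain W where "adjugate (B ** A) = mat 1 + scale_mat (of_nat p ^ 1) W"
    by (auto simp: Gam_iff)
  then have K: "adjugate (B ** A) ** ?K = ?K + scale_mat (of_nat p ^ 1) (W ** ?K)"
    by (simp add: matrix_add_rdistrib scale_mat_matrix_mul_left)
  show "level_residue p (r + s) (grp_comm A B)
           = sl_bracket (Rmodp p) (level_residue p r A) (level_residue p s B)"
    unfolding level_residue_def level_coord_eq[OF C] sl_bracket_residue_mat K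
    by (rule residue_mat_add_scale_mat) simp
qed

lemma gr_piece_eq_FactGroup:
  "gr_piece p r = (SL\<lparr>carrier := Gam p r\<rparr> :: ('a^'n::finite^'n) monoid)
     Mod kernel (SL\<lparr>carrier := Gam p r\<rparr>) (sl_add (Rmodp p)) (level_residue p r)"
  by (simp add: gr_piece_def kernel_level_residue)

lemma iso_gr_piece_to_sl:
  assumes "1 \<le> r"
  shows "gr_piece_to_sl p r \<in> iso (gr_piece p r :: ('a^'n::finite^'n) set monoid) (sl_add (Rmodp p))"
proof -
  interpret group_hom "SL\<lparr>carrier := Gam p r\<rparr>" "sl_add (Rmodp p) :: ('n \<Rightarrow> 'n \<Rightarrow> 'a set) monoid"
    "level_residue p r"
    by (rule group_hom_level_residue[OF assms])
  show ?thesis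
    using FactGroup_iso_set level_residue_image[OF assms]
    by (simp add: gr_piece_eq_FactGroup gr_piece_to_sl_def[abs_def])
qed

lemma group_gr_piece:
  assumes "1 \<le> r"
  shows "group (gr_piece p r :: ('a^'n::finite^'n) set monoid)"
proof -
  interpret group_hom "SL\<lparr>carrier := Gam p r\<rparr>" "sl_add (Rmodp p) :: ('n \<Rightarrow> 'n \<Rightarrow> 'a set) monoid"
    "level_residue p r"
    by (rule group_hom_level_residue[OF assms])
  show ?thesis
    using normal.factorgroup_is_group[OF normal_kernel] by (simp add: gr_piece_eq_FactGroup)
qed

lemma iso_sl_to_gr_piece:
  "1 \<le> r \<Longrightarrow> sl_to_gr_piece p r \<in> iso (sl_add (Rmodp p)) (gr_piece p r :: ('a^'n::finite^'n) set monoid)"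
  unfolding sl_to_gr_piece_def by (rule group.iso_set_sym[OF group_gr_piece iso_gr_piece_to_sl])

lemma comm_group_gr_piece: "1 \<le> r \<Longrightarrow> comm_group (gr_piece p r :: ('a^'n::finite^'n) set monoid)"
  using comm_group.iso_imp_comm_group[OF cring.comm_group_sl_add[OF cring_Rmodp]]
    iso_sl_to_gr_piece group_gr_piece
  by (metis group.is_monoid is_isoI)

lemma sl_to_gr_piece_representative:
  assumes "1 \<le> r" "a \<in> carrier (sl_add (Rmodp p) :: ('n::finite \<Rightarrow> 'n \<Rightarrow> 'a set) monoid)"
  defines "g \<equiv> SOME g. g \<in> (sl_to_gr_piece p r a :: ('a^'n^'n) set)"
  shows "g \<in> Gam p r" "level_residue p r g = a"
proof -
  let ?C = "sl_to_gr_piece p r a :: ('a^'n^'n) set"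
  have iso: "gr_piece_to_sl p r \<in> iso (gr_piece p r) (sl_add (Rmodp p) :: ('n \<Rightarrow> 'n \<Rightarrow> 'a set) monoid)"
    by (rule iso_gr_piece_to_sl[OF assms(1)])
  then have C: "?C \<in> carrier (gr_piece p r)" and "gr_piece_to_sl p r ?C = a"
    using assms(2) unfolding sl_to_gr_piece_def iso_def bij_betw_def
    by (auto intro: inv_into_into f_inv_into_f)
  moreover have "?C \<in> carrier (SL\<lparr>carrier := Gam p r\<rparr> Mod
      kernel (SL\<lparr>carrier := Gam p r\<rparr>) (sl_add (Rmodp p) :: ('n \<Rightarrow> 'n \<Rightarrow> 'a set) monoid) (level_residue p r))"
    using C by (simp add: gr_piece_eq_FactGroup)
  note rep = group_hom.FactGroup_the_elem_some[OF group_hom_level_residue[OF assms(1)] this]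
  ultimately show "g \<in> Gam p r" "level_residue p r g = a"
    using rep by (simp_all add: g_def gr_piece_to_sl_def)
qed

lemma coset_comm_sl_to_gr_piece:
  fixes a b :: "'n::finite \<Rightarrow> 'n \<Rightarrow> 'a set"
  assumes r: "1 \<le> r" and s: "1 \<le> s"
    and a: "a \<in> carrier (sl_add (Rmodp p))" and b: "b \<in> carrier (sl_add (Rmodp p))"
  shows "coset_comm p r s (sl_to_gr_piece p r a) (sl_to_gr_piece p s b :: ('a^'n^'n) set)
           = sl_to_gr_piece p (r + s) (sl_bracket (Rmodp p) a b)"
proof -
  define g where "g = (SOME g. g \<in> (sl_to_gr_piece p r a :: ('a^'n^'n) set))"
  define h where "h = (SOME h. h \<in> (sl_to_gr_piece p s b :: ('a^'n^'n) set))"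
  have g: "g \<in> Gam p r" "level_residue p r g = a"
    using sl_to_gr_piece_representative[OF r a] unfolding g_def by blast+
  have h: "h \<in> Gam p s" "level_residue p s h = b"
    using sl_to_gr_piece_representative[OF s b] unfolding h_def by blast+
  let ?G = "SL\<lparr>carrier := Gam p (r + s)\<rparr> :: ('a^'n^'n) monoid"
  have rs: "1 \<le> r + s" using r by simp
  interpret hom: group_hom ?G "sl_add (Rmodp p)" "level_residue p (r + s)"
    by (rule group_hom_level_residue[OF rs])
  have comm: "grp_comm g h \<in> Gam p (r + s)"
    "level_residue p (r + s) (grp_comm g h) = sl_bracket (Rmodp p) a b"
    using level_residue_grp_comm[OF r s g(1) h(1)] g(2) h(2) by simp_all
  let ?C = "Gam p (r + s + 1) #>\<^bsub>SL\<^esub> grp_comm g h"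
  have coset: "?C = kernel ?G (sl_add (Rmodp p)) (level_residue p (r + s)) #>\<^bsub>?G\<^esub> grp_comm g h"
    by (simp add: kernel_level_residue r_coset_def)
  then have "?C \<in> carrier (gr_piece p (r + s))"
    unfolding gr_piece_eq_FactGroup FactGroup_def RCOSETS_def using comm(1) by auto
  moreover have "gr_piece_to_sl p (r + s) ?C = sl_bracket (Rmodp p) a b"
    using hom.image_rcoset_kernel[of "grp_comm g h"] comm coset by (simp add: gr_piece_to_sl_def)
  moreover have "gr_piece_to_sl p (r + s)
      \<in> iso (gr_piece p (r + s) :: ('a^'n^'n) set monoid) (sl_add (Rmodp p))"
    by (rule iso_gr_piece_to_sl[OF rs])
  then have "inj_on (gr_piece_to_sl p (r + s)) (carrier (gr_piece p (r + s) :: ('a^'n^'n) set monoid))"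
    by (simp add: iso_def bij_betw_def)
  ultimately have "sl_to_gr_piece p (r + s) (sl_bracket (Rmodp p) a b) = ?C"
    unfolding sl_to_gr_piece_def by (metis inv_into_f_f)
  then show ?thesis
    by (simp add: coset_comm_def g_def h_def)
qed

lemma loop_to_gr_loop_bracket_component:
  fixes x y :: "nat \<Rightarrow> 'n::finite \<Rightarrow> 'n \<Rightarrow> 'a set"
  assumes k: "1 \<le> k"
    and xk: "\<And>i. 1 \<le> i \<Longrightarrow> x i \<in> carrier (sl_add (Rmodp p))"
    and yk: "\<And>i. 1 \<le> i \<Longrightarrow> y i \<in> carrier (sl_add (Rmodp p))"
  shows "loop_to_gr p (loop_bracket p x y) k = gr_bracket p (loop_to_gr p x) (loop_to_gr p y) k"
    (is "?f (loop_bracket p x y) k = gr_bracket p (?f x) (?f y) k")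
proof -
  let ?S = "{(i, j). 1 \<le> i \<and> 1 \<le> j \<and> i + j = k}"
  let ?F = "\<lambda>(i, j). sl_bracket (Rmodp p) (x i) (y j)"
  have "sl_to_gr_piece p k \<in> iso (sl_add (Rmodp p)) (gr_piece p k :: ('a^'n^'n) set monoid)"
    by (rule iso_sl_to_gr_piece[OF k])
  then have hom: "sl_to_gr_piece p k \<in> hom (sl_add (Rmodp p)) (gr_piece p k :: ('a^'n^'n) set monoid)"
    by (simp add: iso_def)
  have sl: "comm_group (sl_add (Rmodp p) :: ('n \<Rightarrow> 'n \<Rightarrow> 'a set) monoid)"
    by (rule cring.comm_group_sl_add[OF cring_Rmodp])
  have finite: "finite ?S"
    by (rule finite_subset[of _ "{..k} \<times> {..k}"]) auto
  have F: "?F \<in> ?S \<rightarrow> carrier (sl_add (Rmodp p))"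
    using xk yk by (auto intro: sl_bracket_closed)
  have coset_comm: "(\<lambda>(r, s). coset_comm p r s (?f x r) (?f y s)) z = sl_to_gr_piece p k (?F z)"
    if z: "z \<in> ?S" for z
  proof -
    obtain i j where ij: "z = (i, j)" "1 \<le> i" "1 \<le> j" "i + j = k"
      using z by (cases z) auto
    then show ?thesis
      using coset_comm_sl_to_gr_piece[OF ij(2,3) xk[OF ij(2)] yk[OF ij(3)]]
      by (simp add: loop_to_gr_def pos_degrees_def)
  qed
  have "?f (loop_bracket p x y) k = sl_to_gr_piece p k (finprod (sl_add (Rmodp p)) ?F ?S)"
    using k by (simp add: loop_to_gr_def loop_bracket_def pos_degrees_def)
  also have "\<dots> = finprod (gr_piece p k) (\<lambda>(r, s). coset_comm p r s (?f x r) (?f y s)) ?S"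
    by (rule comm_group_hom_finprod[where h = "sl_to_gr_piece p k",
          OF hom sl comm_group_gr_piece[OF k] finite F coset_comm])
  also have "\<dots> = gr_bracket p (?f x) (?f y) k"
    using k by (simp add: gr_bracket_def pos_degrees_def)
  finally show ?thesis .
qed

lemma loop_to_gr_loop_bracket:
  fixes x y :: "nat \<Rightarrow> 'n::finite \<Rightarrow> 'n \<Rightarrow> 'a set"
  assumes x: "x \<in> carrier (loop_add p)" and y: "y \<in> carrier (loop_add p)"
  shows "loop_to_gr p (loop_bracket p x y) = gr_bracket p (loop_to_gr p x) (loop_to_gr p y)"
proof
  fix k
  have "group (sl_add (Rmodp p) :: ('n \<Rightarrow> 'n \<Rightarrow> 'a set) monoid)"
    using cring.comm_group_sl_add[OF cring_Rmodp] by (rule comm_group.axioms(2))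
  then have xk: "x i \<in> carrier (sl_add (Rmodp p))" and yk: "y i \<in> carrier (sl_add (Rmodp p))"
    if "1 \<le> i" for i
    using x y that by (auto simp: loop_add_def carrier_sum_group pos_degrees_def PiE_iff)
  show "loop_to_gr p (loop_bracket p x y) k = gr_bracket p (loop_to_gr p x) (loop_to_gr p y) k"
  proof (cases "1 \<le> k")
    case True
    then show ?thesis
      by (rule loop_to_gr_loop_bracket_component[OF _ xk yk])
  qed (simp add: loop_to_gr_def gr_bracket_def pos_degrees_def)
qed

lemma iso_loop_to_gr:
  "loop_to_gr p \<in> iso (loop_add p :: (nat \<Rightarrow> 'n::finite \<Rightarrow> 'n \<Rightarrow> 'a set) monoid) (gr_add p)"
  unfolding loop_to_gr_def[abs_def] loop_add_def gr_add_def
  using cring.comm_group_sl_add[OF cring_Rmodp]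
  by (intro iso_sum_group_map) (auto simp: pos_degrees_def iso_sl_to_gr_piece group_gr_piece comm_group_def)

lemma lie_iso_loop_to_gr:
  "lie_iso (loop_add p :: (nat \<Rightarrow> 'n::finite \<Rightarrow> 'n \<Rightarrow> 'a set) monoid) (loop_bracket p)
     (gr_add p) (gr_bracket p) (loop_to_gr p)"
  unfolding lie_iso_def using iso_loop_to_gr loop_to_gr_loop_bracket by blast

end

theorem theorem2p4:
  fixes V :: "'a::comm_ring_1 set" and p :: nat
  assumes "free_Z_basis V"
    and "CARD('n::finite) \<ge> 2"
    and "Factorial_Ring.prime p"
  shows "\<exists>f. lie_iso (loop_add p :: (nat \<Rightarrow> 'n \<Rightarrow> 'n \<Rightarrow> 'a set) monoid) (loop_bracket p)
                      (gr_add p :: (nat \<Rightarrow> ('a ^ 'n ^ 'n) set) monoid) (gr_bracket p) f"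
proof -
  have "of_nat p * x = 0 \<Longrightarrow> x = 0" for x :: 'a
    using free_Z_basis_imp_torsion_free[OF assms(1), of "int p" x] prime_gt_0_nat[OF assms(3)]
    by simp
  then show ?thesis
    using lie_iso_loop_to_gr by blast
qed

end
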